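(* Let $U\subseteq\mathbb{R}^4$ be open with coordinates $(x^1,x^2,x^3,x^4)$ and let $a,b,p,q,s$ be real constants with $a^2+b^2\neq0$. Consider the Lorentzian metric $$g=2\,dx^1dx^4+(dx^2)^2+(dx^3)^2+\Big(x^4\big(a(x^2)^2+b(x^3)^2\big)+p(x^2)^2+2qx^2x^3+s(x^3)^2\Big)(dx^4)^2$$ on $U$. Then $(U,g)$ belongs to class $\mathcal{B}$, i.e. its Ricci tensor is a Codazzi tensor.
   Context: A pseudo-Riemannian manifold belongs to Gray's class $\mathcal{B}$ if its Ricci tensor $\varrho$ satisfies $(\nabla_X\varrho)(Y,Z)=(\nabla_Y\varrho)(X,Z)$ for all vector fields $X,Y,Z$, where $\nabla$ is the Levi-Civita connection. *)

theory Defs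
  imports "HOL-Analysis.Analysis"
begin

definition partial :: "'n::finite \<Rightarrow> (real^'n \<Rightarrow> real) \<Rightarrow> real^'n \<Rightarrow> real" where
  "partial i f x = deriv (\<lambda>t. f (x + t *\<^sub>R axis i 1)) 0"

fun partials :: "'n::finite list \<Rightarrow> (real^'n \<Rightarrow> real) \<Rightarrow> real^'n \<Rightarrow> real" where
  "partials [] f = f"
| "partials (i # is) f = partial i (partials is f)"

definition smooth_on :: "(real^'n::finite) set \<Rightarrow> (real^'n \<Rightarrow> real) \<Rightarrow> bool" where
  "smooth_on U f \<longleftrightarrow> (\<forall>is. partials is f differentiable_on U)"

text \<open>A metric in coordinates: g x i j is the component g_ij at the point x.\<close>
type_synonym 'n metric = "real^'n \<Rightarrow> 'n \<Rightarrow> 'n \<Rightarrow> real"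

definition pseudo_riemannian :: "(real^'n::finite) set \<Rightarrow> 'n metric \<Rightarrow> bool" where
  "pseudo_riemannian U g \<longleftrightarrow> open U \<and>
     (\<forall>i j. smooth_on U (\<lambda>x. g x i j)) \<and>
     (\<forall>x\<in>U. \<forall>i j. g x i j = g x j i) \<and>
     (\<forall>x\<in>U. det (\<chi> i j. g x i j) \<noteq> 0)"

definition ginv :: "('n::finite) metric \<Rightarrow> real^'n \<Rightarrow> 'n \<Rightarrow> 'n \<Rightarrow> real" where
  "ginv g x i j = matrix_inv (\<chi> a b. g x a b) $ i $ j"

text \<open>Christoffel symbols of the Levi-Civita connection: christoffel g x k i j = Gamma^k_ij.\<close>
definition christoffel :: "('n::finite) metric \<Rightarrow> real^'n \<Rightarrow> 'n \<Rightarrow> 'n \<Rightarrow> 'n \<Rightarrow> real" where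
  "christoffel g x k i j = (1/2) * (\<Sum>l\<in>UNIV. ginv g x k l *
      (partial i (\<lambda>y. g y j l) x + partial j (\<lambda>y. g y i l) x - partial l (\<lambda>y. g y i j) x))"

text \<open>Ricci tensor Ric_jk = R^i_{ijk} (contraction of the Riemann tensor).\<close>
definition ricci :: "('n::finite) metric \<Rightarrow> real^'n \<Rightarrow> 'n \<Rightarrow> 'n \<Rightarrow> real" where
  "ricci g x j k = (\<Sum>i\<in>UNIV.
      partial i (\<lambda>y. christoffel g y i j k) x - partial j (\<lambda>y. christoffel g y i i k) x
      + (\<Sum>p\<in>UNIV. christoffel g x i i p * christoffel g x p j k
                   - christoffel g x i j p * christoffel g x p i k))"

definition nabla_ricci :: "('n::finite) metric \<Rightarrow> real^'n \<Rightarrow> 'n \<Rightarrow> 'n \<Rightarrow> 'n \<Rightarrow> real" where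
  "nabla_ricci g x i j k = partial i (\<lambda>y. ricci g y j k) x
     - (\<Sum>p\<in>UNIV. christoffel g x p i j * ricci g x p k)
     - (\<Sum>p\<in>UNIV. christoffel g x p i k * ricci g x j p)"

text \<open>Gray's class B: the Ricci tensor is Codazzi, (nabla_X Ric)(Y,Z) = (nabla_Y Ric)(X,Z),
  written in coordinates (equivalent by tensoriality).\<close>
definition class_B :: "(real^'n::finite) set \<Rightarrow> 'n metric \<Rightarrow> bool" where
  "class_B U g \<longleftrightarrow> pseudo_riemannian U g \<and>
     (\<forall>x\<in>U. \<forall>i j k. nabla_ricci g x i j k = nabla_ricci g x j i k)"

text \<open>The metric of the theorem. Indices 1,2,3,4 of type 4 (note 4 = 0 in the numeral type,
  but 1,2,3,4 are the four distinct elements).\<close>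
definition paper_metric :: "real \<Rightarrow> real \<Rightarrow> real \<Rightarrow> real \<Rightarrow> real \<Rightarrow> 4 metric" where
  "paper_metric a b p q s x i j =
     (if (i = 1 \<and> j = 4) \<or> (i = 4 \<and> j = 1) then 1
      else if i = j \<and> (i = 2 \<or> i = 3) then 1
      else if i = 4 \<and> j = 4 then
        x$4 * (a * (x$2)^2 + b * (x$3)^2) + p * (x$2)^2 + 2 * q * x$2 * x$3 + s * (x$3)^2
      else 0)"

end

theory Submission
  imports Defs
begin

text \<open>The metric is a Walker metric 2 dx1 dx4 + dx2^2 + dx3^2 + H dx4^2 whose potential H does
  not depend on x1. For such metrics the Christoffel symbols are linear in the gradient of H and
  vanish for upper index 4, all quadratic terms of the curvature cancel, and the Ricci tensor is
  Ric = -(H_22 + H_33)/2 dx4 \<otimes> dx4. Since Gamma^4_ij = 0, the covariant derivative of Ric is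
  d(Ric_44) \<otimes> dx4 \<otimes> dx4, which is Codazzi as soon as Ric_44 depends on x4 alone. For the
  given potential Ric_44 = -((a + b) x4 + p + s).\<close>

lemma partial_eqI:
  assumes "((\<lambda>t. f (x + t *\<^sub>R axis i 1)) has_real_derivative D) (at 0)"
  shows "partial i f x = D"
  using assms unfolding partial_def by (rule DERIV_imp_deriv)

lemma partial_eq_0_if_invariant:
  assumes "\<And>t. f (x + t *\<^sub>R axis i 1) = f x"
  shows "partial i f x = 0"
  by (rule partial_eqI) (simp add: assms)

lemma partial_translation_invariant:
  assumes "\<And>y t. f (y + t *\<^sub>R axis i 1) = f y"
  shows "partial l f (x + t *\<^sub>R axis i 1) = partial l f x"
proof -
  have "f (x + t *\<^sub>R axis i 1 + s *\<^sub>R axis l 1) = f (x + s *\<^sub>R axis l 1)" for s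
    using assms[of "x + s *\<^sub>R axis l 1" t] by (simp add: algebra_simps)
  then show ?thesis
    by (simp add: partial_def)
qed

lemma has_real_derivative_partial:
  assumes "f differentiable (at x)"
  shows "((\<lambda>t. f (x + t *\<^sub>R axis i 1)) has_real_derivative partial i f x) (at 0)"
proof -
  obtain f' where f': "(f has_derivative f') (at x)"
    using assms by (auto simp: differentiable_def)
  have "((\<lambda>t. f (x + t *\<^sub>R axis i 1)) has_derivative (\<lambda>h. f' (h *\<^sub>R axis i 1))) (at 0)"
    using f'
    by (auto intro!: derivative_eq_intros
        has_derivative_compose[of "\<lambda>t. x + t *\<^sub>R axis i 1" _ 0 _ f f'])
  then have "((\<lambda>t. f (x + t *\<^sub>R axis i 1)) has_real_derivative f' (axis i 1)) (at 0)"
    using has_derivative_linear[OF f'] by (simp add: has_field_derivative_def linear_scale mult_commute_abs)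
  with partial_eqI[OF this] show ?thesis by simp
qed

lemma partial_of_bool_mult: "partial i (\<lambda>y. of_bool P * f y) x = of_bool P * partial i f x"
  by (cases P) (simp_all add: partial_eq_0_if_invariant)

lemma real_polynomial_function_partial:
  fixes f :: "real^'n \<Rightarrow> real"
  assumes "real_polynomial_function f"
  shows "real_polynomial_function (partial i f)"
  using assms
proof induction
  case (linear f)
  have "partial i f x = f (axis i 1)" for x
    by (rule partial_eqI)
       (auto intro!: derivative_eq_intros simp: linear_add linear_scale bounded_linear.linear[OF linear])
  then show ?case by auto
next
  case (const c)
  then show ?case by (simp add: partial_eq_0_if_invariant real_polynomial_function.intros(2))
next
  case (add f g)
  have "partial i (\<lambda>x. f x + g x) x = partial i f x + partial i g x" for x
    by (intro partial_eqI DERIV_add has_real_derivative_partial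
        differentiable_at_real_polynomial_function add.hyps)
  with add.IH show ?case by auto
next
  case (mult f g)
  have "partial i (\<lambda>x. f x * g x) x = partial i f x * g x + f x * partial i g x" for x
    using DERIV_mult[OF has_real_derivative_partial has_real_derivative_partial,
        OF differentiable_at_real_polynomial_function differentiable_at_real_polynomial_function,
        OF mult.hyps, of x i]
    by (auto intro: partial_eqI simp: algebra_simps)
  with mult.IH mult.hyps show ?case by auto
qed

lemma real_polynomial_function_partials:
  "real_polynomial_function f \<Longrightarrow> real_polynomial_function (partials is f)"
  by (induction "is") (auto intro: real_polynomial_function_partial)

lemma real_polynomial_function_smooth_on:
  "real_polynomial_function f \<Longrightarrow> smooth_on U f"
  unfolding smooth_on_def
  by (auto intro: differentiable_on_real_polynomial_function real_polynomial_function_partials)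

lemma matrix_inv_unique:
  fixes A B :: "'a::semiring_1^'n^'n"
  assumes "A ** B = mat 1" "B ** A = mat 1"
  shows "matrix_inv A = B"
proof -
  let ?C = "matrix_inv A"
  have "?C ** A = mat 1"
    unfolding matrix_inv_def by (rule someI2[of _ B]) (use assms in auto)
  have "?C = ?C ** (A ** B)"
    using assms(1) by (simp add: matrix_mul_rid)
  also have "\<dots> = B"
    using \<open>?C ** A = mat 1\<close> by (simp add: matrix_mul_assoc matrix_mul_lid)
  finally show ?thesis .
qed

definition walker_metric :: "(real^4 \<Rightarrow> real) \<Rightarrow> 4 metric" where
  "walker_metric H x i j =
     (if (i = 1 \<and> j = 4) \<or> (i = 4 \<and> j = 1) then 1
      else if i = j \<and> (i = 2 \<or> i = 3) then 1
      else if i = 4 \<and> j = 4 then H x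
      else 0)"

definition walker_inverse :: "real \<Rightarrow> 4 \<Rightarrow> 4 \<Rightarrow> real" where
  "walker_inverse h k l =
     (if k = 1 \<and> l = 1 then - h
      else if (k = 1 \<and> l = 4) \<or> (k = 4 \<and> l = 1) then 1
      else if k = l \<and> (k = 2 \<or> k = 3) then 1
      else 0)"

lemma walker_metric_mult_inverse:
  "(\<chi> i j. walker_metric H x i j) ** (\<chi> i j. walker_inverse (H x) i j) = mat 1"
  "(\<chi> i j. walker_inverse (H x) i j) ** (\<chi> i j. walker_metric H x i j) = mat 1"
  unfolding vec_eq_iff matrix_matrix_mult_def mat_def
  by (simp_all add: sum_4 forall_4 walker_metric_def walker_inverse_def)

lemma walker_metric_entry:
  "(\<lambda>x. walker_metric H x i j) = (if i = 4 \<and> j = 4 then H else (\<lambda>_. walker_metric H 0 i j))"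
  by (auto simp: walker_metric_def)

lemma ginv_walker_metric: "ginv (walker_metric H) x k l = walker_inverse (H x) k l"
  unfolding ginv_def using matrix_inv_unique[OF walker_metric_mult_inverse] by simp

lemma walker_pseudo_riemannian:
  assumes "open U" and "smooth_on U H"
  shows "pseudo_riemannian U (walker_metric H)"
  unfolding pseudo_riemannian_def
proof (intro conjI allI ballI)
  show "smooth_on U (\<lambda>x. walker_metric H x i j)" for i j
    using assms(2) real_polynomial_function_smooth_on[OF real_polynomial_function.intros(2)]
    by (auto simp: walker_metric_entry)
  show "det (\<chi> i j. walker_metric H x i j) \<noteq> 0" for x
    using walker_metric_mult_inverse invertible_det_nz invertible_right_inverse by blast
  show "walker_metric H x i j = walker_metric H x j i" for x i j
    by (simp add: walker_metric_def conj_commute)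
qed (rule assms(1))

lemma partial_walker_metric:
  "partial l (\<lambda>y. walker_metric H y i j) x = of_bool (i = 4 \<and> j = 4) * partial l H x"
  by (simp add: walker_metric_entry partial_eq_0_if_invariant)

text \<open>The argument dH stands for the gradient of H at the point; the formula uses dH 1 = 0.\<close>
definition walker_christoffel :: "(4 \<Rightarrow> real) \<Rightarrow> 4 \<Rightarrow> 4 \<Rightarrow> 4 \<Rightarrow> real" where
  "walker_christoffel dH k i j =
     of_bool (k = 1) * (of_bool (j = 4) * dH i + of_bool (i = 4) * dH j - of_bool (i = 4 \<and> j = 4) * dH 4) / 2
     - of_bool ((k = 2 \<or> k = 3) \<and> i = 4 \<and> j = 4) * dH k / 2"

lemma christoffel_walker_metric:
  assumes "partial 1 H x = 0"
  shows "christoffel (walker_metric H) x k i j = walker_christoffel (\<lambda>l. partial l H x) k i j"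
  unfolding christoffel_def ginv_walker_metric partial_walker_metric sum_4
    walker_christoffel_def walker_inverse_def
  using exhaust_4[of k] exhaust_4[of i] exhaust_4[of j] assms
  by (elim disjE) simp_all

lemma has_real_derivative_walker_christoffel:
  assumes "\<And>l. ((\<lambda>t. dH t l) has_real_derivative dH' l) (at 0)"
  shows "((\<lambda>t. walker_christoffel (dH t) k i j) has_real_derivative walker_christoffel dH' k i j) (at 0)"
  unfolding walker_christoffel_def
  by (intro DERIV_diff DERIV_add DERIV_cmult DERIV_cdivide assms)

lemma walker_christoffel_trace:
  "dH 1 = 0 \<Longrightarrow> (\<Sum>i\<in>UNIV. walker_christoffel dH i i k) = 0"
  by (simp add: sum_4 walker_christoffel_def)

lemma walker_christoffel_mult_eq_0:
  "dH 1 = 0 \<Longrightarrow> walker_christoffel dH i j p * walker_christoffel dH p i k = 0"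
  using exhaust_4[of i] exhaust_4[of p]
  by (elim disjE) (simp_all add: walker_christoffel_def)

definition walker_ricci44 :: "(real^4 \<Rightarrow> real) \<Rightarrow> real^4 \<Rightarrow> real" where
  "walker_ricci44 H x = - (partial 2 (partial 2 H) x + partial 3 (partial 3 H) x) / 2"

lemma ricci_walker_metric:
  assumes x1_invariant: "\<And>y t. H (y + t *\<^sub>R axis 1 1) = H y"
    and C2: "\<And>l y. partial l H differentiable (at y)"
  shows "ricci (walker_metric H) x j k = of_bool (j = 4 \<and> k = 4) * walker_ricci44 H x"
proof -
  have H_1: "partial 1 H y = 0" for y
    using x1_invariant by (rule partial_eq_0_if_invariant)
  have H_1l: "partial 1 (partial l H) x = 0" for l
    by (intro partial_eq_0_if_invariant partial_translation_invariant x1_invariant)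
  have H_l1: "partial l (partial 1 H) x = 0" for l
    by (simp add: H_1 partial_eq_0_if_invariant)
  have \<Gamma>: "christoffel (walker_metric H) y k i j = walker_christoffel (\<lambda>l. partial l H y) k i j"
    for y k i j
    using H_1 by (rule christoffel_walker_metric)
  have d\<Gamma>: "partial m (\<lambda>y. christoffel (walker_metric H) y k i j) x
      = walker_christoffel (\<lambda>l. partial m (partial l H) x) k i j" for m k i j
    unfolding \<Gamma>
    by (intro partial_eqI has_real_derivative_walker_christoffel has_real_derivative_partial C2)
  have "ricci (walker_metric H) x j k = (\<Sum>i\<in>UNIV. walker_christoffel (\<lambda>l. partial i (partial l H) x) i j k)"
    unfolding ricci_def d\<Gamma> unfolding \<Gamma>
    by (simp add: sum.distrib sum_subtractf walker_christoffel_trace walker_christoffel_mult_eq_0 H_1 H_l1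
        sum.swap[of _ UNIV UNIV] flip: sum_distrib_right)
  also have "\<dots> = of_bool (j = 4 \<and> k = 4) * walker_ricci44 H x"
    unfolding sum_4 walker_christoffel_def walker_ricci44_def
    using exhaust_4[of j] exhaust_4[of k]
    by (elim disjE) (simp_all add: H_1l)
  finally show ?thesis .
qed

lemma nabla_ricci_walker_metric:
  assumes x1_invariant: "\<And>y t. H (y + t *\<^sub>R axis 1 1) = H y"
    and C2: "\<And>l y. partial l H differentiable (at y)"
  shows "nabla_ricci (walker_metric H) x i j k = of_bool (j = 4 \<and> k = 4) * partial i (walker_ricci44 H) x"
proof -
  have H_1: "partial 1 H x = 0"
    using x1_invariant by (rule partial_eq_0_if_invariant)
  show ?thesis
    unfolding nabla_ricci_def partial_of_bool_mult ricci_walker_metric[OF assms]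
      christoffel_walker_metric[OF H_1]
    by (simp add: sum_4 walker_christoffel_def)
qed

lemma walker_metric_class_B:
  assumes "open U" and "smooth_on U H"
    and x1_invariant: "\<And>y t. H (y + t *\<^sub>R axis 1 1) = H y"
    and C2: "\<And>l y. partial l H differentiable (at y)"
    and ricci44_x4_only: "\<And>x i. x \<in> U \<Longrightarrow> i \<noteq> 4 \<Longrightarrow> partial i (walker_ricci44 H) x = 0"
  shows "class_B U (walker_metric H)"
  unfolding class_B_def nabla_ricci_walker_metric[OF x1_invariant C2]
  using walker_pseudo_riemannian[OF assms(1,2)] ricci44_x4_only by auto

definition paper_potential :: "real \<Rightarrow> real \<Rightarrow> real \<Rightarrow> real \<Rightarrow> real \<Rightarrow> real^4 \<Rightarrow> real" where
  "paper_potential a b p q s x =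
     x$4 * (a * (x$2)^2 + b * (x$3)^2) + p * (x$2)^2 + 2 * q * x$2 * x$3 + s * (x$3)^2"

lemma paper_metric_eq_walker_metric:
  "paper_metric a b p q s = walker_metric (paper_potential a b p q s)"
  by (intro ext) (simp only: paper_metric_def walker_metric_def paper_potential_def)

lemma real_polynomial_function_paper_potential:
  "real_polynomial_function (paper_potential a b p q s)"
proof -
  have coord: "real_polynomial_function (\<lambda>x::real^4. x $ k)" for k
    by (intro real_polynomial_function.intros(1) bounded_linear_vec_nth)
  show ?thesis
    unfolding paper_potential_def
    by (intro real_polynomial_function.intros(2-4) real_polynomial_function_power coord)
qed

lemma paper_potential_x1_invariant:
  "paper_potential a b p q s (y + t *\<^sub>R axis 1 1) = paper_potential a b p q s y"
  by (simp add: paper_potential_def axis_def)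

lemma walker_ricci44_paper_potential:
  "walker_ricci44 (paper_potential a b p q s) x = - ((a + b) * x$4 + p + s)"
proof -
  have "partial 2 (paper_potential a b p q s) = (\<lambda>y. 2 * a * y$4 * y$2 + 2 * p * y$2 + 2 * q * y$3)"
    unfolding paper_potential_def
    by (intro ext partial_eqI) (rule derivative_eq_intros refl | simp add: axis_def algebra_simps)+
  moreover have "partial 3 (paper_potential a b p q s) = (\<lambda>y. 2 * b * y$4 * y$3 + 2 * q * y$2 + 2 * s * y$3)"
    unfolding paper_potential_def
    by (intro ext partial_eqI) (rule derivative_eq_intros refl | simp add: axis_def algebra_simps)+
  moreover have "partial 2 (\<lambda>y. 2 * a * y$4 * y$2 + 2 * p * y$2 + 2 * q * y$3) x = 2 * a * x$4 + 2 * p"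
    by (rule partial_eqI) (rule derivative_eq_intros refl | simp add: axis_def algebra_simps)+
  moreover have "partial 3 (\<lambda>y. 2 * b * y$4 * y$3 + 2 * q * y$2 + 2 * s * y$3) x = 2 * b * x$4 + 2 * s"
    by (rule partial_eqI) (rule derivative_eq_intros refl | simp add: axis_def algebra_simps)+
  ultimately show ?thesis
    by (simp add: walker_ricci44_def field_simps)
qed

theorem mainTheorem4:
  fixes U :: "(real^4) set" and a b p q s :: real
  assumes "open U" and "a^2 + b^2 \<noteq> 0"
  shows "class_B U (paper_metric a b p q s)"
  unfolding paper_metric_eq_walker_metric
proof (rule walker_metric_class_B)
  show "open U" by (rule assms(1))
  show "smooth_on U (paper_potential a b p q s)"
    by (intro real_polynomial_function_smooth_on real_polynomial_function_paper_potential)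
  show "paper_potential a b p q s (y + t *\<^sub>R axis 1 1) = paper_potential a b p q s y" for y t
    by (rule paper_potential_x1_invariant)
  show "partial l (paper_potential a b p q s) differentiable (at y)" for l y
    by (intro differentiable_at_real_polynomial_function real_polynomial_function_partial
        real_polynomial_function_paper_potential)
  show "partial i (walker_ricci44 (paper_potential a b p q s)) x = 0" if "i \<noteq> 4" for x i
    using that by (intro partial_eq_0_if_invariant) (simp add: walker_ricci44_paper_potential axis_def)
qed

end
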